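(* Let $N\geq 1$ and $m_p\geq 1$ be integers, let $\beta_1,\ldots,\beta_{m_p}>0$, and let $\mathbf{c}_1,\ldots,\mathbf{c}_{m_p}$ be independent random vectors, each distributed as $\mathcal{CN}(\mathbf{0},\mathbf{I}_N)$. Define $$\mathcal{Y}\triangleq \min_{1\leq i\leq m_p}\beta_i\|\mathbf{c}_i\|^2 .$$ Then $\mathcal{Y}$ has probability density function, for $x>0$, $$f_{\mathcal{Y}}(x)=\sum_{s=1}^{m_p}\ \sum_{(t_l)_{l\neq s}\in\{0,1,\ldots,N-1\}^{m_p-1}}\frac{\beta_s^{-N}}{\Gamma(N)}\left(\prod_{\substack{l=1\\ l\neq s}}^{m_p}\frac{\beta_l^{-t_l}}{t_l!}\right)x^{\sum_{l\neq s}t_l+N-1}\exp\!\left(-\Big(\sum_{t=1}^{m_p}\frac{1}{\beta_t}\Big)x\right),$$ where the inner sum runs over all choices of integers $t_l\in\{0,\ldots,N-1\}$ for each index $l\in\{1,\ldots,m_p\}\setminus\{s\}$.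
   Context: $\mathcal{CN}(\mathbf{0},\mathbf{I}_N)$ denotes the circularly-symmetric complex Gaussian distribution on $\mathbb{C}^N$ with zero mean and identity covariance; $\|\cdot\|$ is the Euclidean norm; $\Gamma(N)=(N-1)!$. *)

theory Defs
  imports "HOL-Probability.Probability"
begin

text \<open>Density of the circularly-symmetric complex Gaussian CN(0, I_N) on complex^'n,
  N = CARD('n), with respect to Lebesgue measure on complex^'n (= R^(2N)):
  f(z) = pi^(-N) * exp(-||z||^2).\<close>
definition cn_std_density :: "complex ^ 'n \<Rightarrow> real" where
  "cn_std_density z = exp (- (norm z)\<^sup>2) / pi ^ CARD('n)"

definition is_CN_std :: "'a measure \<Rightarrow> ('a \<Rightarrow> complex ^ 'n) \<Rightarrow> bool" where
  "is_CN_std M X \<longleftrightarrow> distributed M lborel X (\<lambda>z. ennreal (cn_std_density z))"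

end

theory Submission
  imports Defs
begin

text \<open>The real and imaginary parts of the entries of a \<open>CN(0, I_N)\<close> vector are \<open>2N\<close>
  independent \<open>N(0, 1/2)\<close> variables. The sum of squares of two of them is \<open>Exp(1)\<close>
  (a Gaussian integral over a disk), so \<open>\<beta>_i \<parallel>c_i\<parallel>^2\<close> is Erlang with shape \<open>N\<close> and
  scale \<open>\<beta>_i\<close>. By independence, the survival function of the minimum is the product of the
  Erlang survival functions \<open>S_i(x) = exp (- x / \<beta>_i) \<Sum>_{t < N} (x / \<beta>_i)^t / t!\<close>;
  differentiating by the product rule and multiplying out the product of finite sums gives the
  stated density.\<close>

section \<open>Coordinates of a standard complex Gaussian vector\<close>

definition gauss_density :: "real \<Rightarrow> real" where
  "gauss_density t = exp (- t\<^sup>2) / sqrt pi"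

lemma gauss_density_eq_normal_density: "gauss_density = normal_density 0 (1 / sqrt 2)"
  by (auto simp: fun_eq_iff gauss_density_def normal_density_def power_divide real_sqrt_mult)

lemma gauss_density_nonneg [simp]: "0 \<le> gauss_density t"
  by (simp add: gauss_density_def)

lemma borel_measurable_gauss_density [measurable]: "gauss_density \<in> borel_measurable borel"
  unfolding gauss_density_def by measurable

lemma cn_std_density_eq_prod_gauss_density:
  "cn_std_density (z :: complex ^ 'n) = (\<Prod>b\<in>Basis. gauss_density (z \<bullet> b))"
proof -
  have "(norm z)\<^sup>2 = (\<Sum>b\<in>Basis. (z \<bullet> b)\<^sup>2)"
    unfolding power2_norm_eq_inner by (subst euclidean_inner) (simp add: power2_eq_square)
  then have "(\<Prod>b\<in>(Basis :: (complex ^ 'n) set). exp (- (z \<bullet> b)\<^sup>2)) = exp (- (norm z)\<^sup>2)"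
    by (simp add: exp_sum[symmetric] sum_negf)
  moreover have "(\<Prod>b\<in>(Basis :: (complex ^ 'n) set). sqrt pi) = pi ^ CARD('n)"
  proof -
    have "(\<Prod>b\<in>(Basis :: (complex ^ 'n) set). sqrt pi) = sqrt pi ^ (2 * CARD('n))"
      by (simp only: prod_constant DIM_cart DIM_complex mult.commute)
    also have "\<dots> = pi ^ CARD('n)"
      by (simp add: power_mult)
    finally show ?thesis .
  qed
  ultimately show ?thesis
    unfolding cn_std_density_def gauss_density_def prod_dividef by simp
qed

definition gauss_measure :: "real measure" where
  "gauss_measure = density lborel (\<lambda>t. ennreal (gauss_density t))"

lemma prob_space_gauss_measure: "prob_space gauss_measure"
  unfolding gauss_measure_def gauss_density_eq_normal_density
  by (rule prob_space_normal_density) simp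

lemma space_gauss_measure [simp]: "space gauss_measure = UNIV"
  by (simp add: gauss_measure_def)

lemma nn_integral_gauss_density_indicator:
  assumes "A \<in> sets borel"
  shows "(\<integral>\<^sup>+t. ennreal (gauss_density t) * indicator A t \<partial>lborel) = ennreal (measure gauss_measure A)"
proof -
  interpret prob_space gauss_measure
    by (rule prob_space_gauss_measure)
  have "(\<integral>\<^sup>+t. ennreal (gauss_density t) * indicator A t \<partial>lborel) = emeasure gauss_measure A"
    using assms unfolding gauss_measure_def by (simp add: emeasure_density)
  then show ?thesis
    by (simp add: emeasure_eq_measure)
qed

definition cn_std_measure :: "(complex ^ 'n) measure" where
  "cn_std_measure = density lborel (\<lambda>z. ennreal (cn_std_density z))"

lemma borel_measurable_cn_std_density [measurable]: "cn_std_density \<in> borel_measurable borel"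
  unfolding cn_std_density_def by measurable

lemma space_cn_std_measure [simp]: "space cn_std_measure = UNIV"
  by (simp add: cn_std_measure_def)

lemma sets_cn_std_measure [simp, measurable_cong]: "sets cn_std_measure = sets borel"
  by (simp add: cn_std_measure_def)

lemma emeasure_cn_std_measure_box:
  fixes A :: "complex ^ 'n \<Rightarrow> real set"
  assumes A: "\<And>b. b \<in> Basis \<Longrightarrow> A b \<in> sets borel"
  shows "emeasure cn_std_measure {z. \<forall>b\<in>Basis. z \<bullet> b \<in> A b}
    = ennreal (\<Prod>b\<in>Basis. measure gauss_measure (A b))"
proof -
  have "{z. \<forall>b\<in>Basis. z \<bullet> b \<in> A b} = (\<Inter>b\<in>Basis. (\<lambda>z. z \<bullet> b) -` A b)"
    by auto
  also have "\<dots> \<in> sets borel"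
  proof (intro sets.finite_INT ballI)
    fix b :: "complex ^ 'n"
    assume "b \<in> Basis"
    have "(\<lambda>z::complex ^ 'n. z \<bullet> b) \<in> borel_measurable borel"
      by measurable
    from measurable_sets[OF this A[OF \<open>b \<in> Basis\<close>]] show "(\<lambda>z. z \<bullet> b) -` A b \<in> sets borel"
      by simp
  qed simp_all
  finally have box: "{z::complex ^ 'n. \<forall>b\<in>Basis. z \<bullet> b \<in> A b} \<in> sets borel" .
  have "emeasure cn_std_measure {z. \<forall>b\<in>Basis. z \<bullet> b \<in> A b}
      = (\<integral>\<^sup>+z. ennreal (cn_std_density z) * indicator {z. \<forall>b\<in>Basis. z \<bullet> b \<in> A b} z \<partial>lborel)"
    using box unfolding cn_std_measure_def by (simp add: emeasure_density)
  also have "\<dots> = (\<integral>\<^sup>+z. ennreal (cn_std_density z) * (\<Prod>b\<in>Basis. indicator (A b) (z \<bullet> b)) \<partial>lborel)"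
    by (intro nn_integral_cong) (simp add: indicator_def prod.neutral)
  also have "\<dots> = (\<integral>\<^sup>+z. (\<Prod>b\<in>Basis. ennreal (gauss_density (z \<bullet> b)) * indicator (A b) (z \<bullet> b)) \<partial>lborel)"
    by (intro nn_integral_cong) (simp add: cn_std_density_eq_prod_gauss_density prod.distrib prod_ennreal)
  also have "\<dots> = (\<Prod>b\<in>Basis. \<integral>\<^sup>+t. ennreal (gauss_density t) * indicator (A b) t \<partial>lborel)"
    using A by (intro nn_integral_lborel_prod) auto
  also have "\<dots> = ennreal (\<Prod>b\<in>Basis. measure gauss_measure (A b))"
    using A by (simp add: nn_integral_gauss_density_indicator prod_ennreal)
  finally show ?thesis .
qed

lemma prob_space_cn_std_measure: "prob_space (cn_std_measure :: (complex ^ 'n) measure)"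
proof
  interpret prob_space gauss_measure
    by (rule prob_space_gauss_measure)
  have "emeasure (cn_std_measure :: (complex ^ 'n) measure) {z. \<forall>b\<in>Basis. z \<bullet> b \<in> UNIV} = 1"
    using prob_space by (subst emeasure_cn_std_measure_box) simp_all
  then show "emeasure (cn_std_measure :: (complex ^ 'n) measure) (space cn_std_measure) = 1"
    by simp
qed

lemma emeasure_cn_std_measure_inner_vimage:
  fixes b :: "complex ^ 'n"
  assumes b: "b \<in> Basis" and A: "A \<in> sets borel"
  shows "emeasure cn_std_measure ((\<lambda>z. z \<bullet> b) -` A) = ennreal (measure gauss_measure A)"
proof -
  interpret prob_space gauss_measure
    by (rule prob_space_gauss_measure)
  have "(\<lambda>z::complex ^ 'n. z \<bullet> b) -` A = {z. \<forall>b'\<in>Basis. z \<bullet> b' \<in> (if b' = b then A else UNIV)}"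
    using b by auto
  moreover have "(\<Prod>b'\<in>(Basis::(complex ^ 'n) set). measure gauss_measure (if b' = b then A else UNIV))
      = measure gauss_measure A"
    using b prob_space by (simp add: if_distrib prod.delta cong: if_cong)
  ultimately show ?thesis
    using A by (simp add: emeasure_cn_std_measure_box)
qed

lemma indep_vars_inner_Basis:
  "prob_space.indep_vars (cn_std_measure :: (complex ^ 'n) measure) (\<lambda>_. borel) (\<lambda>b z. z \<bullet> b) Basis"
proof -
  interpret prob_space "cn_std_measure :: (complex ^ 'n) measure"
    by (rule prob_space_cn_std_measure)
  show ?thesis
  proof (subst indep_vars_finite[where E="\<lambda>_. sets borel"])
    show "\<forall>A\<in>\<Pi> i\<in>Basis. sets borel.
      prob (\<Inter>j\<in>Basis. (\<lambda>z::complex ^ 'n. z \<bullet> j) -` A j \<inter> space cn_std_measure)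
      = (\<Prod>j\<in>Basis. prob ((\<lambda>z. z \<bullet> j) -` A j \<inter> space cn_std_measure))"
    proof
      fix A assume "A \<in> (\<Pi> i\<in>(Basis::(complex ^ 'n) set). sets (borel::real measure))"
      then have A: "\<And>b. b \<in> Basis \<Longrightarrow> A b \<in> sets borel"
        by auto
      have "(\<Inter>j\<in>Basis. (\<lambda>z::complex ^ 'n. z \<bullet> j) -` A j \<inter> space cn_std_measure)
          = {z. \<forall>b\<in>Basis. z \<bullet> b \<in> A b}"
        by auto
      moreover have "emeasure cn_std_measure {z::complex ^ 'n. \<forall>b\<in>Basis. z \<bullet> b \<in> A b}
          = ennreal (\<Prod>b\<in>Basis. measure gauss_measure (A b))"
        by (rule emeasure_cn_std_measure_box) (rule A)
      then have "prob {z::complex ^ 'n. \<forall>b\<in>Basis. z \<bullet> b \<in> A b} = (\<Prod>b\<in>Basis. measure gauss_measure (A b))"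
        by (simp add: emeasure_eq_measure prod_nonneg)
      moreover have "prob ((\<lambda>z::complex ^ 'n. z \<bullet> j) -` A j) = measure gauss_measure (A j)"
        if "j \<in> Basis" for j
        using emeasure_cn_std_measure_inner_vimage[OF that A[OF that]] by (simp add: emeasure_eq_measure)
      ultimately show "prob (\<Inter>j\<in>Basis. (\<lambda>z::complex ^ 'n. z \<bullet> j) -` A j \<inter> space cn_std_measure)
          = (\<Prod>j\<in>Basis. prob ((\<lambda>z. z \<bullet> j) -` A j \<inter> space cn_std_measure))"
        by simp
    qed
  qed (auto simp: sets.Int_stable sets.space_closed sets.sigma_sets_eq[of borel, simplified])
qed

lemma distributed_inner_Basis:
  assumes b: "(b :: complex ^ 'n) \<in> Basis"
  shows "distributed cn_std_measure lborel (\<lambda>z. z \<bullet> b) gauss_density"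
proof (rule distributedI_borel_atMost[where g="\<lambda>a. measure gauss_measure {..a}"])
  fix a :: real
  show "(\<integral>\<^sup>+x. ennreal (gauss_density x * indicator {..a} x) \<partial>lborel) = ennreal (measure gauss_measure {..a})"
    using nn_integral_gauss_density_indicator[of "{..a}"] by (simp add: ennreal_mult' ennreal_indicator)
  have "{x \<in> space cn_std_measure. x \<bullet> b \<le> a} = (\<lambda>z::complex ^ 'n. z \<bullet> b) -` {..a}"
    by auto
  then show "emeasure cn_std_measure {x \<in> space cn_std_measure. x \<bullet> b \<le> a} = ennreal (measure gauss_measure {..a})"
    using emeasure_cn_std_measure_inner_vimage[OF b, of "{..a}"] by simp
qed simp_all

section \<open>Squared modulus of a complex Gaussian coordinate\<close>

lemma nn_integral_lborel_even:
  fixes h :: "real \<Rightarrow> ennreal"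
  assumes [measurable]: "h \<in> borel_measurable borel" and even: "\<And>y. h (- y) = h y"
  shows "(\<integral>\<^sup>+y. h y \<partial>lborel) = 2 * (\<integral>\<^sup>+y. h y * indicator {0<..} y \<partial>lborel)"
proof -
  have "(\<integral>\<^sup>+y. h y \<partial>lborel) = (\<integral>\<^sup>+y. h y * indicator {0<..} y + h y * indicator {..0} y \<partial>lborel)"
    by (intro nn_integral_cong) (auto split: split_indicator)
  also have "\<dots> = (\<integral>\<^sup>+y. h y * indicator {0<..} y \<partial>lborel) + (\<integral>\<^sup>+y. h y * indicator {..0} y \<partial>lborel)"
    by (rule nn_integral_add) auto
  also have "(\<integral>\<^sup>+y. h y * indicator {..0} y \<partial>lborel)
      = ennreal \<bar>-1\<bar> * (\<integral>\<^sup>+y. h (0 + -1 * y) * indicator {..0} (0 + -1 * y) \<partial>lborel)"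
    by (rule nn_integral_real_affine) auto
  also have "\<dots> = (\<integral>\<^sup>+y. h y * indicator {0..} y \<partial>lborel)"
    by (auto simp: even intro!: nn_integral_cong split: split_indicator)
  also have "\<dots> = (\<integral>\<^sup>+y. h y * indicator {0<..} y \<partial>lborel)"
    by (intro nn_integral_cong_AE) (use AE_lborel_singleton[of 0] in \<open>auto split: split_indicator\<close>)
  finally show ?thesis
    by (simp add: mult_2)
qed

definition gauss_on_disk :: "real \<Rightarrow> real \<Rightarrow> real \<Rightarrow> real" where
  "gauss_on_disk a x y = (if x\<^sup>2 + y\<^sup>2 \<le> a then exp (- x\<^sup>2) * exp (- y\<^sup>2) else 0)"

lemma gauss_on_disk_nonneg [simp]: "0 \<le> gauss_on_disk a x y"
  by (simp add: gauss_on_disk_def)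

lemma borel_measurable_gauss_on_disk [measurable]:
  "case_prod (gauss_on_disk a) \<in> borel_measurable (borel \<Otimes>\<^sub>M borel)"
  unfolding gauss_on_disk_def by measurable

lemma borel_measurable_gauss_on_disk_section [measurable]: "gauss_on_disk a x \<in> borel_measurable borel"
  unfolding gauss_on_disk_def by measurable

text \<open>Polar coordinates in disguise: substituting \<open>y = x s\<close> for fixed \<open>x > 0\<close> turns the disk
  into \<open>x\<^sup>2 (1 + s\<^sup>2) \<le> a\<close>; after swapping the integrals the \<open>x\<close>-integral is elementary
  and the \<open>s\<close>-integral is an arctangent.\<close>

lemma nn_integral_gauss_on_disk_subst:
  assumes x: "0 < x"
  shows "(\<integral>\<^sup>+y. ennreal (gauss_on_disk a x y) * indicator {0<..} y \<partial>lborel)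
    = (\<integral>\<^sup>+s. ennreal (x * exp (- (x\<^sup>2 * (1 + s\<^sup>2)))) * indicator {0<..} s
        * indicator {..a} (x\<^sup>2 * (1 + s\<^sup>2)) \<partial>lborel)"
proof -
  have "(\<integral>\<^sup>+y. ennreal (gauss_on_disk a x y) * indicator {0<..} y \<partial>lborel)
     = ennreal \<bar>x\<bar> * (\<integral>\<^sup>+s. ennreal (gauss_on_disk a x (0 + x * s)) * indicator {0<..} (0 + x * s) \<partial>lborel)"
    using x by (intro nn_integral_real_affine) auto
  also have "\<dots> = (\<integral>\<^sup>+s. ennreal x * (ennreal (gauss_on_disk a x (x * s)) * indicator {0<..} (x * s)) \<partial>lborel)"
    using x by (simp add: nn_integral_cmult)
  also have "\<dots> = (\<integral>\<^sup>+s. ennreal (x * exp (- (x\<^sup>2 * (1 + s\<^sup>2)))) * indicator {0<..} s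
        * indicator {..a} (x\<^sup>2 * (1 + s\<^sup>2)) \<partial>lborel)"
  proof (intro nn_integral_cong)
    fix s :: real
    have "exp (- x\<^sup>2) * exp (- (x * s)\<^sup>2) = exp (- (x\<^sup>2 * (1 + s\<^sup>2)))"
      by (simp add: mult_exp_exp power_mult_distrib algebra_simps)
    moreover have "x\<^sup>2 + (x * s)\<^sup>2 = x\<^sup>2 * (1 + s\<^sup>2)"
      by (simp add: power_mult_distrib algebra_simps)
    moreover have "(x * s > 0) = (s > 0)"
      using x by (simp add: zero_less_mult_iff)
    ultimately show "ennreal x * (ennreal (gauss_on_disk a x (x * s)) * indicator {0<..} (x * s))
        = ennreal (x * exp (- (x\<^sup>2 * (1 + s\<^sup>2)))) * indicator {0<..} s * indicator {..a} (x\<^sup>2 * (1 + s\<^sup>2))"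
      using x unfolding gauss_on_disk_def by (auto simp: ennreal_mult split: split_indicator)
  qed
  finally show ?thesis .
qed

lemma nn_integral_gauss_on_disk_radial:
  assumes a: "0 \<le> a"
  shows "(\<integral>\<^sup>+x. ennreal (x * exp (- (x\<^sup>2 * (1 + s\<^sup>2)))) * indicator {0<..} s
        * indicator {..a} (x\<^sup>2 * (1 + s\<^sup>2)) * indicator {0<..} x \<partial>lborel)
     = ennreal ((1 - exp (- a)) / (2 * (1 + s\<^sup>2))) * indicator {0<..} s"
proof -
  define c where "c = 1 + s\<^sup>2"
  have c: "0 < c"
    unfolding c_def by (simp add: add_pos_nonneg)
  define r where "r = sqrt (a / c)"
  have r: "0 \<le> r" and rr: "r\<^sup>2 = a / c"
    unfolding r_def using a c by simp_all
  have disk_iff: "(x\<^sup>2 * c \<le> a) = (x \<le> r)" if "0 < x" for x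
  proof -
    have "(x\<^sup>2 * c \<le> a) = (x\<^sup>2 \<le> r\<^sup>2)"
      unfolding rr using c by (simp add: pos_le_divide_eq)
    also have "\<dots> = (x \<le> r)"
      using that r by (simp add: power2_le_iff_abs_le)
    finally show ?thesis .
  qed
  have "(\<integral>\<^sup>+x. ennreal (x * exp (- (x\<^sup>2 * c))) * indicator {..a} (x\<^sup>2 * c) * indicator {0<..} x \<partial>lborel)
      = (\<integral>\<^sup>+x. ennreal (x * exp (- (x\<^sup>2 * c))) * indicator {0..r} x \<partial>lborel)"
    by (intro nn_integral_cong, (case_tac "0 < x"; case_tac "x = 0"))
       (auto simp: disk_iff split: split_indicator)
  also have "\<dots> = ennreal (- exp (- (r\<^sup>2 * c)) / (2 * c) - - exp (- (0\<^sup>2 * c)) / (2 * c))"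
    using r c
    by (intro nn_integral_FTC_Icc[where F="\<lambda>x. - exp (- (x\<^sup>2 * c)) / (2 * c)"])
       (auto intro!: derivative_eq_intros simp: field_simps)
  also have "- exp (- (r\<^sup>2 * c)) / (2 * c) - - exp (- (0\<^sup>2 * c)) / (2 * c) = (1 - exp (- a)) / (2 * c)"
    using c unfolding rr by (simp add: field_simps)
  finally show ?thesis
    unfolding c_def by (auto split: split_indicator)
qed

lemma nn_integral_gauss_on_disk_angular:
  assumes a: "0 \<le> a"
  shows "(\<integral>\<^sup>+s. ennreal ((1 - exp (- a)) / (2 * (1 + s\<^sup>2))) * indicator {0<..} s \<partial>lborel)
     = ennreal ((1 - exp (- a)) * pi / 4)"
proof -
  have "(\<integral>\<^sup>+s. ennreal ((1 - exp (- a)) / (2 * (1 + s\<^sup>2))) * indicator {0<..} s \<partial>lborel)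
      = (\<integral>\<^sup>+s. ennreal ((1 - exp (- a)) / (2 * (1 + s\<^sup>2))) * indicator {0..} s \<partial>lborel)"
    by (intro nn_integral_cong_AE) (use AE_lborel_singleton[of 0] in \<open>auto split: split_indicator\<close>)
  also have "\<dots> = ennreal ((1 - exp (- a)) * (pi / 2) / 2 - (1 - exp (- a)) * arctan 0 / 2)"
  proof (rule nn_integral_FTC_atLeast[where F="\<lambda>s. (1 - exp (- a)) * arctan s / 2"])
    fix x :: real
    show "((\<lambda>s. (1 - exp (- a)) * arctan s / 2) has_real_derivative (1 - exp (- a)) / (2 * (1 + x\<^sup>2))) (at x)"
      by (auto intro!: derivative_eq_intros simp: field_simps add_nonneg_eq_0_iff power2_eq_square)
    show "0 \<le> (1 - exp (- a)) / (2 * (1 + x\<^sup>2))"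
      using a by (simp add: add_nonneg_nonneg)
    show "((\<lambda>s. (1 - exp (- a)) * arctan s / 2) \<longlongrightarrow> (1 - exp (- a)) * (pi / 2) / 2) at_top"
      by (intro tendsto_intros tendsto_arctan_at_top) simp
  qed measurable
  also have "\<dots> = ennreal ((1 - exp (- a)) * pi / 4)"
    by simp
  finally show ?thesis .
qed

lemma nn_integral_gauss_on_disk:
  assumes a: "0 \<le> a"
  shows "(\<integral>\<^sup>+x. \<integral>\<^sup>+y. ennreal (gauss_on_disk a x y) \<partial>lborel \<partial>lborel) = ennreal (pi * (1 - exp (- a)))"
proof -
  let ?I = "\<lambda>x. \<integral>\<^sup>+y. ennreal (gauss_on_disk a x y) * indicator {0<..} y \<partial>lborel"
  let ?g = "\<lambda>s x. ennreal (x * exp (- (x\<^sup>2 * (1 + s\<^sup>2)))) * indicator {0<..} s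
              * indicator {..a} (x\<^sup>2 * (1 + s\<^sup>2)) * indicator {0<..} x"
  have even: "gauss_on_disk a x (- y) = gauss_on_disk a x y" "gauss_on_disk a (- x) y = gauss_on_disk a x y" for x y
    by (simp_all add: gauss_on_disk_def)
  have "(\<integral>\<^sup>+x. \<integral>\<^sup>+y. ennreal (gauss_on_disk a x y) \<partial>lborel \<partial>lborel) = (\<integral>\<^sup>+x. 2 * ?I x \<partial>lborel)"
    by (intro nn_integral_cong nn_integral_lborel_even) (auto simp: even)
  also have "\<dots> = 2 * (\<integral>\<^sup>+x. ?I x \<partial>lborel)"
    by (rule nn_integral_cmult) measurable
  also have "(\<integral>\<^sup>+x. ?I x \<partial>lborel) = 2 * (\<integral>\<^sup>+x. ?I x * indicator {0<..} x \<partial>lborel)"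
    by (rule nn_integral_lborel_even) (measurable, simp add: even)
  also have "(\<integral>\<^sup>+x. ?I x * indicator {0<..} x \<partial>lborel) = (\<integral>\<^sup>+x. \<integral>\<^sup>+s. ?g s x \<partial>lborel \<partial>lborel)"
    by (intro nn_integral_cong, case_tac "0 < x")
       (simp_all add: nn_integral_gauss_on_disk_subst nn_integral_multc)
  also have "\<dots> = (\<integral>\<^sup>+s. \<integral>\<^sup>+x. ?g s x \<partial>lborel \<partial>lborel)"
    by (rule lborel_pair.Fubini'[symmetric]) measurable
  also have "\<dots> = (\<integral>\<^sup>+s. ennreal ((1 - exp (- a)) / (2 * (1 + s\<^sup>2))) * indicator {0<..} s \<partial>lborel)"
    by (intro nn_integral_cong nn_integral_gauss_on_disk_radial a)
  also have "\<dots> = ennreal ((1 - exp (- a)) * pi / 4)"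
    by (rule nn_integral_gauss_on_disk_angular[OF a])
  also have "2 * (2 * ennreal ((1 - exp (- a)) * pi / 4)) = ennreal 4 * ennreal ((1 - exp (- a)) * pi / 4)"
    by (simp add: mult.assoc[symmetric])
  also have "\<dots> = ennreal (4 * ((1 - exp (- a)) * pi / 4))"
    using a by (intro ennreal_mult[symmetric]) auto
  finally show ?thesis
    by (simp add: mult.commute)
qed

lemma (in prob_space) indep_var_lborel:
  "indep_var borel X borel Y \<Longrightarrow> indep_var lborel X lborel Y"
  unfolding indep_var_def indep_vars_def2 by (simp add: bool.case_eq_if measurable_lborel2)

lemma (in prob_space) distributed_sum_sq_gauss_exponential:
  assumes ind: "indep_var borel X borel Y"
    and X: "distributed M lborel X gauss_density" and Y: "distributed M lborel Y gauss_density"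
  shows "distributed M lborel (\<lambda>\<omega>. (X \<omega>)\<^sup>2 + (Y \<omega>)\<^sup>2) (erlang_density 0 1)"
proof (rule erlang_distributedI)
  have [measurable]: "X \<in> borel_measurable M" "Y \<in> borel_measurable M"
    using distributed_measurable[OF X] distributed_measurable[OF Y] by simp_all
  show "(\<lambda>\<omega>. (X \<omega>)\<^sup>2 + (Y \<omega>)\<^sup>2) \<in> borel_measurable M"
    by measurable
  fix a :: real
  assume a: "0 \<le> a"
  let ?f = "\<lambda>(x, y). ennreal (gauss_density x) * ennreal (gauss_density y)"
  have J: "distributed M (lborel \<Otimes>\<^sub>M lborel) (\<lambda>\<omega>. (X \<omega>, Y \<omega>)) ?f"
    by (rule distributed_joint_indep[OF _ _ X Y indep_var_lborel[OF ind]])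
       (auto intro: lborel.sigma_finite_measure_axioms)
  define D where "D = {p \<in> space (lborel \<Otimes>\<^sub>M lborel). (fst p)\<^sup>2 + (snd p)\<^sup>2 \<le> a}"
  have D: "D \<in> sets (lborel \<Otimes>\<^sub>M lborel)"
    unfolding D_def by measurable
  have "emeasure M {\<omega> \<in> space M. (X \<omega>)\<^sup>2 + (Y \<omega>)\<^sup>2 \<le> a}
      = emeasure (distr M (lborel \<Otimes>\<^sub>M lborel) (\<lambda>\<omega>. (X \<omega>, Y \<omega>))) D"
    using D distributed_measurable[OF J]
    by (subst emeasure_distr) (auto simp: D_def space_pair_measure intro!: arg_cong2[where f=emeasure])
  also have "\<dots> = (\<integral>\<^sup>+p. ?f p * indicator D p \<partial>(lborel \<Otimes>\<^sub>M lborel))"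
    unfolding distributed_distr_eq_density[OF J] by (rule emeasure_density[OF _ D]) measurable
  also have "\<dots> = (\<integral>\<^sup>+x. \<integral>\<^sup>+y. ?f (x, y) * indicator D (x, y) \<partial>lborel \<partial>lborel)"
    by (rule lborel.nn_integral_fst[symmetric]) (use D distributed_borel_measurable[OF J] in auto)
  also have "\<dots> = (\<integral>\<^sup>+x. \<integral>\<^sup>+y. ennreal (1 / pi) * ennreal (gauss_on_disk a x y) \<partial>lborel \<partial>lborel)"
    by (intro nn_integral_cong)
       (auto simp: D_def gauss_on_disk_def gauss_density_def ennreal_mult[symmetric] space_pair_measure
        split: split_indicator)
  also have "\<dots> = ennreal (1 / pi) * ennreal (pi * (1 - exp (- a)))"
    by (simp add: nn_integral_cmult nn_integral_gauss_on_disk a)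
  also have "\<dots> = ennreal (erlang_CDF 0 1 a)"
    using a by (simp add: ennreal_mult[symmetric] erlang_CDF_def)
  finally show "emeasure M {\<omega> \<in> space M. (X \<omega>)\<^sup>2 + (Y \<omega>)\<^sup>2 \<le> a} = ennreal (erlang_CDF 0 1 a)" .
qed simp

section \<open>The squared norm of a standard complex Gaussian vector\<close>

lemma distributed_norm_sq_cn_std_measure:
  "distributed (cn_std_measure :: (complex ^ 'n) measure) lborel (\<lambda>z. (norm z)\<^sup>2)
     (erlang_density (CARD('n) - 1) 1)"
proof -
  interpret prob_space "cn_std_measure :: (complex ^ 'n) measure"
    by (rule prob_space_cn_std_measure)
  define re where "re = (\<lambda>j::'n. axis j (1::complex))"
  define im where "im = (\<lambda>j::'n. axis j (\<i>::complex))"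
  have Basis: "re j \<in> Basis" "im j \<in> Basis" and re_neq_im: "re j \<noteq> im j" for j
    by (simp_all add: re_def im_def axis_eq_axis complex_eq_iff)
  have inner: "z \<bullet> re j = Re (z $ j)" "z \<bullet> im j = Im (z $ j)" for z :: "complex ^ 'n" and j
    by (simp_all add: re_def im_def inner_axis)
  have exponential: "distributed cn_std_measure lborel (\<lambda>z::complex ^ 'n. (norm (z $ j))\<^sup>2) (erlang_density 0 1)"
    for j
  proof -
    have "indep_var (Pi\<^sub>M {re j} (\<lambda>_. borel)) (\<lambda>z. restrict (\<lambda>b. z \<bullet> b) {re j})
        (Pi\<^sub>M {im j} (\<lambda>_. borel)) (\<lambda>z. restrict (\<lambda>b. z \<bullet> b) {im j})"
      by (rule indep_var_restrict[OF indep_vars_inner_Basis]) (auto simp: Basis re_neq_im)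
    from indep_var_compose[OF this, of "\<lambda>f. f (re j)" borel "\<lambda>f. f (im j)" borel]
    have "indep_var borel (\<lambda>z::complex ^ 'n. z \<bullet> re j) borel (\<lambda>z. z \<bullet> im j)"
      by (simp add: comp_def)
    from distributed_sum_sq_gauss_exponential[OF this distributed_inner_Basis distributed_inner_Basis]
    show ?thesis
      by (simp add: Basis inner cmod_power2)
  qed
  have "indep_vars (\<lambda>j. Pi\<^sub>M {re j, im j} (\<lambda>_. borel)) (\<lambda>j z. restrict (\<lambda>b. z \<bullet> b) {re j, im j}) UNIV"
    by (rule indep_vars_restrict[OF indep_vars_inner_Basis])
       (auto simp: Basis disjoint_family_on_def re_def im_def axis_eq_axis)
  from indep_vars_compose2[OF this, of "\<lambda>j f. (f (re j))\<^sup>2 + (f (im j))\<^sup>2" "\<lambda>_. borel"]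
  have "indep_vars (\<lambda>_. borel) (\<lambda>j (z::complex ^ 'n). (norm (z $ j))\<^sup>2) UNIV"
    by (simp add: inner cmod_power2)
  from exponential_distributed_sum[OF _ _ _ exponential this]
  show ?thesis
    by (simp add: power2_norm_eq_inner inner_vec_def)
qed

lemma is_CN_std_distributed_norm_sq:
  assumes "is_CN_std M (X :: 'a \<Rightarrow> complex ^ 'n)"
  shows "distributed M lborel (\<lambda>\<omega>. (norm (X \<omega>))\<^sup>2) (erlang_density (CARD('n) - 1) 1)"
proof -
  have D: "distributed M lborel X (\<lambda>z. ennreal (cn_std_density z))"
    using assms by (simp add: is_CN_std_def)
  have X: "X \<in> measurable M lborel"
    by (rule distributed_measurable[OF D])
  have "distr M lborel (\<lambda>\<omega>. (norm (X \<omega>))\<^sup>2) = distr (distr M lborel X) lborel (\<lambda>z. (norm z)\<^sup>2)"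
    using X by (subst distr_distr) (auto simp: comp_def)
  also have "\<dots> = density lborel (erlang_density (CARD('n) - 1) 1)"
    unfolding distributed_distr_eq_density[OF D, folded cn_std_measure_def]
    by (rule distributed_distr_eq_density[OF distributed_norm_sq_cn_std_measure])
  finally show ?thesis
    using X unfolding distributed_def by (simp add: measurable_lborel2)
qed

section \<open>The minimum of independent Erlang variables\<close>

lemma (in prob_space) prob_Min_le_indep:
  fixes Z :: "'i \<Rightarrow> 'a \<Rightarrow> real"
  assumes I: "finite I" "I \<noteq> {}" and ind: "indep_vars (\<lambda>_. borel) Z I"
  shows "prob {\<omega> \<in> space M. Min ((\<lambda>i. Z i \<omega>) ` I) \<le> a} = 1 - (\<Prod>i\<in>I. prob {\<omega> \<in> space M. a < Z i \<omega>})"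
proof -
  have [measurable]: "Z i \<in> borel_measurable M" if "i \<in> I" for i
    using ind that unfolding indep_vars_def by auto
  have "{\<omega> \<in> space M. Min ((\<lambda>i. Z i \<omega>) ` I) \<le> a} = space M - (\<Inter>i\<in>I. Z i -` {a<..} \<inter> space M)"
    using I by (auto simp: Min_le_iff not_less)
  moreover have "(\<Inter>i\<in>I. Z i -` {a<..} \<inter> space M) \<in> events"
    using I by (intro sets.finite_INT) auto
  moreover have "prob (\<Inter>i\<in>I. Z i -` {a<..} \<inter> space M) = (\<Prod>i\<in>I. prob (Z i -` {a<..} \<inter> space M))"
    using I by (intro indep_varsD_finite[OF ind]) auto
  ultimately show ?thesis
    by (simp add: prob_compl vimage_def Int_def conj_commute)
qed

text \<open>Survival function and density of the Erlang law with shape \<open>k + 1\<close> and scale \<open>b\<close>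
  (rate \<open>1 / b\<close>), written without the case split at \<open>0\<close> of \<open>erlang_CDF\<close> and
  \<open>erlang_density\<close> so that they are smooth on the whole real line.\<close>

definition erlang_survival :: "nat \<Rightarrow> real \<Rightarrow> real \<Rightarrow> real" where
  "erlang_survival k b x = (\<Sum>n\<le>k. (x / b) ^ n / fact n) * exp (- x / b)"

definition erlang_scale_density :: "nat \<Rightarrow> real \<Rightarrow> real \<Rightarrow> real" where
  "erlang_scale_density k b x = (x / b) ^ k / fact k * exp (- x / b) / b"

lemma erlang_survival_0 [simp]: "erlang_survival k b 0 = 1"
  by (simp add: erlang_survival_def power_0_left sum.atMost_shift del: sum.atMost_Suc)

lemma erlang_survival_nonneg: "0 < b \<Longrightarrow> 0 \<le> x \<Longrightarrow> 0 \<le> erlang_survival k b x"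
  unfolding erlang_survival_def by (intro mult_nonneg_nonneg sum_nonneg) auto

lemma erlang_scale_density_nonneg: "0 < b \<Longrightarrow> 0 \<le> x \<Longrightarrow> 0 \<le> erlang_scale_density k b x"
  unfolding erlang_scale_density_def by simp

lemma erlang_survival_has_real_derivative:
  assumes b: "0 < b"
  shows "(erlang_survival k b has_real_derivative (- erlang_scale_density k b x)) (at x)"
proof (induction k)
  case 0
  show ?case
    using b unfolding erlang_survival_def erlang_scale_density_def
    by (auto intro!: derivative_eq_intros simp: field_simps)
next
  case (Suc k)
  have "((\<lambda>x. (x / b) ^ Suc k / fact (Suc k) * exp (- x / b)) has_real_derivative
      (erlang_scale_density k b x - erlang_scale_density (Suc k) b x)) (at x)"
    using b unfolding erlang_scale_density_def
    by (auto intro!: derivative_eq_intros simp del: fact_Suc power_Suc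
          simp add: field_simps power_Suc[symmetric])
       (simp_all add: field_simps)
  from DERIV_add[OF Suc this]
  have "((\<lambda>x. erlang_survival k b x + (x / b) ^ Suc k / fact (Suc k) * exp (- x / b)) has_real_derivative
      - erlang_scale_density (Suc k) b x) (at x)"
    by simp
  moreover have "erlang_survival (Suc k) b
      = (\<lambda>x. erlang_survival k b x + (x / b) ^ Suc k / fact (Suc k) * exp (- x / b))"
    by (auto simp: erlang_survival_def fun_eq_iff algebra_simps)
  ultimately show ?case
    by simp
qed

lemma (in prob_space) erlang_distributed_gt_eq_survival:
  assumes X: "distributed M lborel X (erlang_density k (1 / b))" and b: "0 < b"
  shows "prob {\<omega> \<in> space M. a < X \<omega>} = (if 0 \<le> a then erlang_survival k b a else 1)"
proof (cases "0 \<le> a")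
  case True
  then show ?thesis
    using erlang_distributed_gt[OF X, of a] b
    by (simp add: erlang_CDF_def erlang_survival_def sum_distrib_left sum_distrib_right field_simps)
next
  case False
  have [measurable]: "X \<in> borel_measurable M"
    using distributed_measurable[OF X] by simp
  have "1 = prob {\<omega> \<in> space M. 0 < X \<omega>}"
    using erlang_distributed_gt[OF X, of 0] b by (simp add: erlang_CDF_at0)
  also have "\<dots> \<le> prob {\<omega> \<in> space M. a < X \<omega>}"
    using False by (intro finite_measure_mono) auto
  finally show ?thesis
    using False prob_le_1 by (simp add: antisym)
qed

lemma one_minus_prod_erlang_survival_has_real_derivative:
  assumes \<beta>: "\<And>i. i \<in> I \<Longrightarrow> 0 < \<beta> i"
  shows "((\<lambda>x. 1 - (\<Prod>i\<in>I. erlang_survival k (\<beta> i) x)) has_real_derivative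
    (\<Sum>s\<in>I. erlang_scale_density k (\<beta> s) x * (\<Prod>l\<in>I - {s}. erlang_survival k (\<beta> l) x))) (at x)"
proof -
  have "((\<lambda>x. \<Prod>i\<in>I. erlang_survival k (\<beta> i) x) has_real_derivative
      (\<Sum>s\<in>I. - erlang_scale_density k (\<beta> s) x * (\<Prod>l\<in>I - {s}. erlang_survival k (\<beta> l) x))) (at x)"
    by (rule has_field_derivative_prod) (rule erlang_survival_has_real_derivative[OF \<beta>])
  from DERIV_diff[OF DERIV_const[of 1] this] show ?thesis
    by (simp add: sum_negf)
qed

lemma (in prob_space) erlang_distributed_Min:
  fixes Z :: "'i \<Rightarrow> 'a \<Rightarrow> real"
  assumes I: "finite I" "I \<noteq> {}" and \<beta>: "\<And>i. i \<in> I \<Longrightarrow> 0 < \<beta> i"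
    and Z: "\<And>i. i \<in> I \<Longrightarrow> distributed M lborel (Z i) (erlang_density k (1 / \<beta> i))"
    and ind: "indep_vars (\<lambda>_. borel) Z I"
  shows "distributed M lborel (\<lambda>\<omega>. Min ((\<lambda>i. Z i \<omega>) ` I))
    (\<lambda>x. ennreal (if 0 < x then \<Sum>s\<in>I. erlang_scale_density k (\<beta> s) x *
        (\<Prod>l\<in>I - {s}. erlang_survival k (\<beta> l) x) else 0))"
    (is "distributed M lborel ?Y (\<lambda>x. ennreal (if 0 < x then ?f x else 0))")
proof -
  let ?F = "\<lambda>x. 1 - (\<Prod>i\<in>I. erlang_survival k (\<beta> i) x)"
  have [measurable]: "Z i \<in> borel_measurable M" if "i \<in> I" for i
    using ind that unfolding indep_vars_def by auto
  have f_measurable [measurable]: "?f \<in> borel_measurable borel"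
    unfolding erlang_scale_density_def erlang_survival_def by measurable
  have f_nonneg: "0 \<le> ?f x" if "0 \<le> x" for x
    using that \<beta>
    by (intro sum_nonneg mult_nonneg_nonneg prod_nonneg erlang_scale_density_nonneg erlang_survival_nonneg) auto
  show ?thesis
  proof (rule distributedI_borel_atMost[where g="\<lambda>a. if 0 \<le> a then ?F a else 0"])
    fix a :: real
    have "prob {\<omega> \<in> space M. ?Y \<omega> \<le> a} = (if 0 \<le> a then ?F a else 0)"
      using \<beta> by (simp add: prob_Min_le_indep[OF I ind] erlang_distributed_gt_eq_survival[OF Z])
    then show "emeasure M {\<omega> \<in> space M. ?Y \<omega> \<le> a} = ennreal (if 0 \<le> a then ?F a else 0)"
      by (simp add: emeasure_eq_measure)
    show "(\<integral>\<^sup>+x. ennreal ((if 0 < x then ?f x else 0) * indicator {..a} x) \<partial>lborel)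
        = ennreal (if 0 \<le> a then ?F a else 0)"
    proof (cases "0 \<le> a")
      case True
      have "(\<integral>\<^sup>+x. ennreal ((if 0 < x then ?f x else 0) * indicator {..a} x) \<partial>lborel)
          = (\<integral>\<^sup>+x. ennreal (?f x) * indicator {0..a} x \<partial>lborel)"
        by (intro nn_integral_cong_AE) (use AE_lborel_singleton[of 0] in \<open>auto split: split_indicator\<close>)
      also have "\<dots> = ennreal (?F a - ?F 0)"
        using True f_nonneg one_minus_prod_erlang_survival_has_real_derivative[OF \<beta>]
        by (intro nn_integral_FTC_Icc) auto
      finally show ?thesis
        using True by simp
    qed (auto intro!: nn_integral_zero' split: split_indicator)
  qed (use I f_nonneg in simp_all)
qed

lemma erlang_scale_density_eq_powr:
  assumes b: "0 < b"
  shows "erlang_scale_density k b x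
    = b powr (- real (Suc k)) / Gamma (real (Suc k)) * x ^ k * exp (- x / b)"
proof -
  have "Gamma (real (Suc k)) = fact k"
    using Gamma_fact[of k] by (simp add: of_nat_Suc add.commute)
  moreover have "b powr (- real (Suc k)) = inverse (b ^ Suc k)"
    by (simp only: powr_minus powr_realpow[OF b])
  ultimately show ?thesis
    unfolding erlang_scale_density_def using b by (simp add: field_simps power_divide)
qed

lemma prod_erlang_survival_eq_sum_PiE:
  assumes J: "finite J" and \<beta>: "\<And>l. l \<in> J \<Longrightarrow> 0 < \<beta> l"
  shows "(\<Prod>l\<in>J. erlang_survival k (\<beta> l) x)
    = (\<Sum>t\<in>PiE J (\<lambda>_. {0..<Suc k}). (\<Prod>l\<in>J. \<beta> l powr (- real (t l)) / fact (t l)) * x ^ (\<Sum>l\<in>J. t l))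
      * exp (- (\<Sum>l\<in>J. 1 / \<beta> l) * x)"
proof -
  have "(\<Prod>l\<in>J. erlang_survival k (\<beta> l) x)
      = (\<Prod>l\<in>J. \<Sum>n\<in>{0..<Suc k}. \<beta> l powr (- real n) / fact n * x ^ n) * (\<Prod>l\<in>J. exp (- x / \<beta> l))"
    unfolding erlang_survival_def prod.distrib atLeast0LessThan lessThan_Suc_atMost
    using \<beta> by (intro arg_cong2[where f="(*)"] prod.cong sum.cong refl)
      (simp_all add: powr_minus powr_realpow field_simps power_divide)
  also have "(\<Prod>l\<in>J. \<Sum>n\<in>{0..<Suc k}. \<beta> l powr (- real n) / fact n * x ^ n)
      = (\<Sum>t\<in>PiE J (\<lambda>_. {0..<Suc k}). (\<Prod>l\<in>J. \<beta> l powr (- real (t l)) / fact (t l)) * x ^ (\<Sum>l\<in>J. t l))"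
    by (simp only: prod_sum_PiE[OF J] finite_atLeastLessThan prod.distrib power_sum)
  also have "(\<Prod>l\<in>J. exp (- x / \<beta> l)) = exp (- (\<Sum>l\<in>J. 1 / \<beta> l) * x)"
    using J by (simp add: exp_sum[symmetric] sum_distrib_right sum_negf)
  finally show ?thesis .
qed

lemma erlang_min_density_term_eq_sum_PiE:
  assumes I: "finite I" and s: "s \<in> I" and \<beta>: "\<And>i. i \<in> I \<Longrightarrow> 0 < \<beta> i"
  shows "erlang_scale_density k (\<beta> s) x * (\<Prod>l\<in>I - {s}. erlang_survival k (\<beta> l) x)
    = (\<Sum>t\<in>PiE (I - {s}) (\<lambda>_. {0..<Suc k}).
        (\<beta> s powr (- real (Suc k)) / Gamma (real (Suc k))) *
        (\<Prod>l\<in>I - {s}. \<beta> l powr (- real (t l)) / fact (t l)) *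
        x ^ ((\<Sum>l\<in>I - {s}. t l) + Suc k - 1) *
        exp (- (\<Sum>j\<in>I. 1 / \<beta> j) * x))"
proof -
  have exp: "exp (- x / \<beta> s) * exp (- (\<Sum>l\<in>I - {s}. 1 / \<beta> l) * x) = exp (- (\<Sum>j\<in>I. 1 / \<beta> j) * x)"
    using I s by (simp add: sum.remove exp_add[symmetric] algebra_simps)
  have survival: "(\<Prod>l\<in>I - {s}. erlang_survival k (\<beta> l) x)
      = (\<Sum>t\<in>PiE (I - {s}) (\<lambda>_. {0..<Suc k}).
          (\<Prod>l\<in>I - {s}. \<beta> l powr (- real (t l)) / fact (t l)) * x ^ (\<Sum>l\<in>I - {s}. t l))
        * exp (- (\<Sum>l\<in>I - {s}. 1 / \<beta> l) * x)"
    using I \<beta> by (intro prod_erlang_survival_eq_sum_PiE) auto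
  have power: "x ^ ((\<Sum>l\<in>I - {s}. t l) + Suc k - 1) = x ^ (\<Sum>l\<in>I - {s}. t l) * x ^ k" for t
    by (simp add: power_add)
  show ?thesis
    unfolding erlang_scale_density_eq_powr[OF \<beta>[OF s]] survival sum_distrib_right sum_distrib_left
    by (intro sum.cong refl) (unfold power exp[symmetric], simp only: mult_ac)
qed

theorem lemma2:
  fixes M :: "'a measure"
    and c :: "nat \<Rightarrow> 'a \<Rightarrow> complex ^ 'n"
    and \<beta> :: "nat \<Rightarrow> real"
    and m :: nat
  assumes "prob_space M"
    and "m \<ge> 1"
    and "\<And>i. i \<in> {1..m} \<Longrightarrow> \<beta> i > 0"
    and "\<And>i. i \<in> {1..m} \<Longrightarrow> is_CN_std M (c i)"
    and "prob_space.indep_vars M (\<lambda>_. borel) c {1..m}"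
  shows "distributed M lborel
     (\<lambda>\<omega>. Min ((\<lambda>i. \<beta> i * (norm (c i \<omega>))\<^sup>2) ` {1..m}))
     (\<lambda>x. ennreal (if x > 0 then
        (\<Sum>s\<in>{1..m}. \<Sum>t\<in>PiE ({1..m} - {s}) (\<lambda>_. {0..<CARD('n)}).
           (\<beta> s powr (- real CARD('n)) / Gamma (real CARD('n))) *
           (\<Prod>l\<in>{1..m} - {s}. \<beta> l powr (- real (t l)) / fact (t l)) *
           x ^ ((\<Sum>l\<in>{1..m} - {s}. t l) + CARD('n) - 1) *
           exp (- (\<Sum>j\<in>{1..m}. 1 / \<beta> j) * x))
      else 0))"
proof -
  interpret prob_space M
    by fact
  define k where "k = CARD('n) - 1"
  have N: "CARD('n) = Suc k"
    unfolding k_def using zero_less_card_finite[where 'a='n] by simp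
  have I: "finite {1..m}" "{1..m} \<noteq> {}"
    using assms(2) by auto
  have "distributed M lborel (\<lambda>\<omega>. \<beta> i * (norm (c i \<omega>))\<^sup>2) (erlang_density k (1 / \<beta> i))"
    if "i \<in> {1..m}" for i
    using erlang_distributed_mult_const[OF is_CN_std_distributed_norm_sq[OF assms(4)[OF that]]]
      assms(3)[OF that] by (simp add: k_def)
  moreover have "indep_vars (\<lambda>_. borel) (\<lambda>i \<omega>. \<beta> i * (norm (c i \<omega>))\<^sup>2) {1..m}"
    by (rule indep_vars_compose2[OF assms(5)]) measurable
  ultimately have min: "distributed M lborel (\<lambda>\<omega>. Min ((\<lambda>i. \<beta> i * (norm (c i \<omega>))\<^sup>2) ` {1..m}))
    (\<lambda>x. ennreal (if 0 < x then \<Sum>s\<in>{1..m}. erlang_scale_density k (\<beta> s) x *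
        (\<Prod>l\<in>{1..m} - {s}. erlang_survival k (\<beta> l) x) else 0))"
    by (intro erlang_distributed_Min I assms(3))
  have density_term: "erlang_scale_density k (\<beta> s) x * (\<Prod>l\<in>{1..m} - {s}. erlang_survival k (\<beta> l) x)
    = (\<Sum>t\<in>PiE ({1..m} - {s}) (\<lambda>_. {0..<CARD('n)}).
        (\<beta> s powr (- real CARD('n)) / Gamma (real CARD('n))) *
        (\<Prod>l\<in>{1..m} - {s}. \<beta> l powr (- real (t l)) / fact (t l)) *
        x ^ ((\<Sum>l\<in>{1..m} - {s}. t l) + CARD('n) - 1) *
        exp (- (\<Sum>j\<in>{1..m}. 1 / \<beta> j) * x))" if "s \<in> {1..m}" for s x
    unfolding N using that assms(3) by (intro erlang_min_density_term_eq_sum_PiE I) auto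
  from min show ?thesis
    by (simp only: density_term cong: sum.cong)
qed

end
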